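(* Let $(X,\mathbb T,\pi)$ be a dynamical system on a complete metric space $(X,\rho)$ and $x\in X$. Assume (1) there is $\tau\in\mathbb T$, $\tau>0$, with $\lim_{t\to+\infty}\rho(\pi(t+\tau,x),\pi(t,x))=0$; (2) $x$ is positively asymptotically Poisson stable. Then $x$ is asymptotically $\tau$-periodic.
   Context: $\mathbb T$ is $\mathbb R_+$ or $\mathbb Z_+$; a dynamical system is a continuous $\pi:\mathbb T\times X\to X$ with $\pi(0,x)=x$, $\pi(t+s,x)=\pi(t,\pi(s,x))$. $\omega_x$ is the set of limits of $\pi(t_k,x)$ with $t_k\to+\infty$. A point $p$ is positively Poisson stable if $p\in\omega_p$; $x$ is positively asymptotically Poisson stable if there is a positively Poisson stable $p$ with $\rho(\pi(t,x),\pi(t,p))\to0$ as $t\to+\infty$. A point $p$ is $\tau$-periodic if $\pi(\tau,p)=p$; $x$ is asymptotically $\tau$-periodic if there is a $\tau$-periodic $p$ with $\lim_{t\to\infty}\rho(\pi(t,x),\pi(t,p))=0$. *)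

theory Defs
  imports "HOL-Analysis.Analysis"
begin

definition time_set :: "real set \<Rightarrow> bool" where
  "time_set T \<longleftrightarrow> T = {0..} \<or> T = range real"

definition dynamical_system :: "real set \<Rightarrow> (real \<Rightarrow> 'a::metric_space \<Rightarrow> 'a) \<Rightarrow> bool" where
  "dynamical_system T \<pi> \<longleftrightarrow> time_set T \<and>
     continuous_on (T \<times> UNIV) (\<lambda>(t, x). \<pi> t x) \<and>
     (\<forall>x. \<pi> 0 x = x) \<and>
     (\<forall>t\<in>T. \<forall>s\<in>T. \<forall>x. \<pi> (t + s) x = \<pi> t (\<pi> s x))"

definition at_top_in :: "real set \<Rightarrow> real filter" where
  "at_top_in T = inf at_top (principal T)"

definition omega_limit :: "real set \<Rightarrow> (real \<Rightarrow> 'a::metric_space \<Rightarrow> 'a) \<Rightarrow> 'a \<Rightarrow> 'a set" where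
  "omega_limit T \<pi> x = {y. \<exists>tk :: nat \<Rightarrow> real. (\<forall>k. tk k \<in> T) \<and>
      filterlim tk at_top sequentially \<and> (\<lambda>k. \<pi> (tk k) x) \<longlonglongrightarrow> y}"

definition pos_poisson_stable :: "real set \<Rightarrow> (real \<Rightarrow> 'a::metric_space \<Rightarrow> 'a) \<Rightarrow> 'a \<Rightarrow> bool" where
  "pos_poisson_stable T \<pi> p \<longleftrightarrow> p \<in> omega_limit T \<pi> p"

definition pos_asymp_poisson_stable :: "real set \<Rightarrow> (real \<Rightarrow> 'a::metric_space \<Rightarrow> 'a) \<Rightarrow> 'a \<Rightarrow> bool" where
  "pos_asymp_poisson_stable T \<pi> x \<longleftrightarrow> (\<exists>p. pos_poisson_stable T \<pi> p \<and>
      ((\<lambda>t. dist (\<pi> t x) (\<pi> t p)) \<longlongrightarrow> 0) (at_top_in T))"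

definition periodic_point :: "(real \<Rightarrow> 'a \<Rightarrow> 'a) \<Rightarrow> real \<Rightarrow> 'a \<Rightarrow> bool" where
  "periodic_point \<pi> \<tau> p \<longleftrightarrow> \<pi> \<tau> p = p"

definition asymp_periodic :: "real set \<Rightarrow> (real \<Rightarrow> 'a::metric_space \<Rightarrow> 'a) \<Rightarrow> real \<Rightarrow> 'a \<Rightarrow> bool" where
  "asymp_periodic T \<pi> \<tau> x \<longleftrightarrow> (\<exists>p. periodic_point \<pi> \<tau> p \<and>
      ((\<lambda>t. dist (\<pi> t x) (\<pi> t p)) \<longlongrightarrow> 0) (at_top_in T))"

end

theory Submission
  imports Defs
begin

text \<open>Let \<open>p\<close> be the Poisson stable point whose orbit attracts that of \<open>x\<close>. Asymptotic
  \<open>\<tau>\<close>-recurrence passes from the orbit of \<open>x\<close> to the orbit of \<open>p\<close> by the triangle inequality,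
  so \<open>\<rho>(\<pi>(t + \<tau>, p), \<pi>(t, p)) \<rightarrow> 0\<close>. Evaluating along times \<open>t\<^sub>k \<rightarrow> \<infinity>\<close> with
  \<open>\<pi>(t\<^sub>k, p) \<rightarrow> p\<close> and using continuity of \<open>\<pi>(\<tau>, \<cdot>)\<close> yields \<open>\<pi>(\<tau>, p) = p\<close>.\<close>

lemma time_set_add:
  assumes "time_set T" "t \<in> T" "s \<in> T"
  shows "t + s \<in> T"
  using assms unfolding time_set_def by (auto simp flip: of_nat_add)

lemma filterlim_at_top_in_iff:
  "filterlim f (at_top_in T) F \<longleftrightarrow> filterlim f at_top F \<and> eventually (\<lambda>t. f t \<in> T) F"
  unfolding at_top_in_def filterlim_inf filterlim_principal by simp

lemma filterlim_add_const_at_top_in: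
  assumes "\<And>t. t \<in> T \<Longrightarrow> t + \<tau> \<in> T"
  shows "filterlim (\<lambda>t. t + \<tau>) (at_top_in T) (at_top_in T)"
  unfolding filterlim_at_top_in_iff
proof
  have "filterlim (\<lambda>t. t + \<tau>) at_top at_top"
    using filterlim_tendsto_add_at_top[OF tendsto_const filterlim_ident, of \<tau>]
    by (simp add: add.commute)
  then show "filterlim (\<lambda>t. t + \<tau>) at_top (at_top_in T)"
    unfolding at_top_in_def using filterlim_mono inf_le1 order_refl by blast
  show "\<forall>\<^sub>F t in at_top_in T. t + \<tau> \<in> T"
    unfolding at_top_in_def by (simp add: eventually_inf_principal assms)
qed

lemma dynamical_system_continuous_on_time:
  assumes "dynamical_system T \<pi>" "t \<in> T"
  shows "continuous_on UNIV (\<pi> t)"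
proof -
  have joint: "continuous_on (T \<times> UNIV) (\<lambda>(t, x). \<pi> t x)"
    using assms(1) unfolding dynamical_system_def by simp
  have "Pair t ` UNIV \<subseteq> T \<times> UNIV"
    using assms(2) by auto
  from continuous_on_compose2[OF joint continuous_on_Pair[OF continuous_on_const continuous_on_id] this]
  show ?thesis by simp
qed

lemma shift_recurrence_transfer:
  fixes f g :: "real \<Rightarrow> 'a::metric_space"
  assumes shift: "filterlim (\<lambda>t. t + \<tau>) F F"
    and close: "((\<lambda>t. dist (f t) (g t)) \<longlongrightarrow> 0) F"
    and recur: "((\<lambda>t. dist (f (t + \<tau>)) (f t)) \<longlongrightarrow> 0) F"
  shows "((\<lambda>t. dist (g (t + \<tau>)) (g t)) \<longlongrightarrow> 0) F"
proof (rule tendsto_sandwich[where f = "\<lambda>_. 0"])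
  have close_shifted: "((\<lambda>t. dist (f (t + \<tau>)) (g (t + \<tau>))) \<longlongrightarrow> 0) F"
    using filterlim_compose[OF close shift] by simp
  have "((\<lambda>t. dist (f (t + \<tau>)) (g (t + \<tau>)) + dist (f (t + \<tau>)) (f t) + dist (f t) (g t))
      \<longlongrightarrow> 0 + 0 + 0) F"
    by (intro tendsto_add close_shifted recur close)
  then show "((\<lambda>t. dist (f (t + \<tau>)) (g (t + \<tau>)) + dist (f (t + \<tau>)) (f t) + dist (f t) (g t))
      \<longlongrightarrow> 0) F"
    by simp
  show "\<forall>\<^sub>F t in F. dist (g (t + \<tau>)) (g t)
      \<le> dist (f (t + \<tau>)) (g (t + \<tau>)) + dist (f (t + \<tau>)) (f t) + dist (f t) (g t)"
  proof (intro always_eventually allI)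
    fix t
    have "dist (g (t + \<tau>)) (g t) \<le> dist (g (t + \<tau>)) (f (t + \<tau>)) + dist (f (t + \<tau>)) (g t)"
      by (rule dist_triangle)
    also have "dist (f (t + \<tau>)) (g t) \<le> dist (f (t + \<tau>)) (f t) + dist (f t) (g t)"
      by (rule dist_triangle)
    finally show "dist (g (t + \<tau>)) (g t)
        \<le> dist (f (t + \<tau>)) (g (t + \<tau>)) + dist (f (t + \<tau>)) (f t) + dist (f t) (g t)"
      by (simp add: dist_commute)
  qed
  show "\<forall>\<^sub>F t in F. 0 \<le> dist (g (t + \<tau>)) (g t)"
    by simp
qed (rule tendsto_const)

lemma periodic_point_if_poisson_stable_recurrent:
  assumes ds: "dynamical_system T \<pi>" and "\<tau> \<in> T"
    and stable: "pos_poisson_stable T \<pi> p"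
    and recur: "((\<lambda>t. dist (\<pi> (t + \<tau>) p) (\<pi> t p)) \<longlongrightarrow> 0) (at_top_in T)"
  shows "periodic_point \<pi> \<tau> p"
proof -
  obtain tk where tk_T: "\<forall>k. tk k \<in> T" and tk_top: "filterlim tk at_top sequentially"
    and tk_return: "(\<lambda>k. \<pi> (tk k) p) \<longlonglongrightarrow> p"
    using stable unfolding pos_poisson_stable_def omega_limit_def by auto
  have "filterlim tk (at_top_in T) sequentially"
    unfolding filterlim_at_top_in_iff using tk_T tk_top by simp
  then have dist_to_0: "(\<lambda>k. dist (\<pi> (tk k + \<tau>) p) (\<pi> (tk k) p)) \<longlonglongrightarrow> 0"
    using filterlim_compose[OF recur] by auto
  have "\<pi> (tk k + \<tau>) p = \<pi> \<tau> (\<pi> (tk k) p)" for k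
    using ds tk_T \<open>\<tau> \<in> T\<close> unfolding dynamical_system_def by (metis add.commute)
  then have "(\<lambda>k. \<pi> (tk k + \<tau>) p) \<longlonglongrightarrow> \<pi> \<tau> p"
    using continuous_on_tendsto_compose[OF dynamical_system_continuous_on_time[OF ds \<open>\<tau> \<in> T\<close>]
        tk_return]
    by simp
  then have "(\<lambda>k. dist (\<pi> (tk k + \<tau>) p) (\<pi> (tk k) p)) \<longlonglongrightarrow> dist (\<pi> \<tau> p) p"
    by (intro tendsto_dist tk_return)
  with dist_to_0 have "dist (\<pi> \<tau> p) p = 0"
    using LIMSEQ_unique by blast
  then show ?thesis
    unfolding periodic_point_def by simp
qed

theorem mainTheorem4:
  fixes T :: "real set" and \<pi> :: "real \<Rightarrow> 'a::complete_space \<Rightarrow> 'a"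
    and x :: 'a and \<tau> :: real
  assumes "dynamical_system T \<pi>"
    and "\<tau> \<in> T" and "\<tau> > 0"
    and "((\<lambda>t. dist (\<pi> (t + \<tau>) x) (\<pi> t x)) \<longlongrightarrow> 0) (at_top_in T)"
    and "pos_asymp_poisson_stable T \<pi> x"
  shows "asymp_periodic T \<pi> \<tau> x"
proof -
  obtain p where stable: "pos_poisson_stable T \<pi> p"
    and close: "((\<lambda>t. dist (\<pi> t x) (\<pi> t p)) \<longlongrightarrow> 0) (at_top_in T)"
    using assms(5) unfolding pos_asymp_poisson_stable_def by auto
  have "time_set T"
    using assms(1) unfolding dynamical_system_def by simp
  then have "filterlim (\<lambda>t. t + \<tau>) (at_top_in T) (at_top_in T)"
    using filterlim_add_const_at_top_in time_set_add assms(2) by blast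
  then have "((\<lambda>t. dist (\<pi> (t + \<tau>) p) (\<pi> t p)) \<longlongrightarrow> 0) (at_top_in T)"
    by (rule shift_recurrence_transfer[where f = "\<lambda>t. \<pi> t x", OF _ close assms(4)])
  then have "periodic_point \<pi> \<tau> p"
    by (rule periodic_point_if_poisson_stable_recurrent[OF assms(1,2) stable])
  with close show ?thesis
    unfolding asymp_periodic_def by blast
qed

end
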